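(* Let $G=(U,V,E)$ be a bipartite graph with $|U|=|V|=N$ in which every vertex of $U$ has at least one neighbor, and run the matching algorithm on $G$. Let $i\ge 0$ with $|M(i)|<N$, let $l\ge 0$ be an integer, and let $u_0\in U$ be free with respect to $M(i)$ with $n_{u_0}\subseteq D_l(i)$. Then every augmenting path in $G$ with respect to $M(i)$ starting at $u_0$ has length at least $2l+1$.
   Context: Matching algorithm. For $u\in U$ let $n_u=\{v\in V:(u,v)\in E\}$. The algorithm maintains a matching $M\subseteq E$ (initially empty) and an integer value $h_v$ for each $v\in V$ (initially $0$). A vertex is free if no edge of $M$ is incident to it. One iteration: choose any free $u\in U$ (arbitrary choice); choose $j\in\arg\min_{v\in n_u}h_v$ (ties broken arbitrarily); if some $u_{\rm old}\in U$ has $(u_{\rm old},j)\in M$, remove $(u_{\rm old},j)$ from $M$ (so $u_{\rm old}$ becomes free); add $(u,j)$ to $M$; increase $h_j$ by $1$. Iterations are repeated while $|M|<N$ and the algorithm terminates when $|M|=N$. $M(i)$ and $h_v(i)$ denote the matching and the values after the $i$-th iteration. For an integer $l$, $D_l(i)=\{v\in V: h_v(i)\ge l\}$. With respect to a matching $M$, an alternating path is a simple path in $G$ whose edges alternate between edges not in $M$ and edges in $M$; an augmenting path is an alternating path whose two endpoints are free vertices (one in $U$, one in $V$). The length of a path is its number of edges. *)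

theory Defs
  imports Main
begin

(* Bipartite graph G = (U,V,E): vertices of U have type 'u, of V type 'v,
   E :: ('u * 'v) set with E \<subseteq> U \<times> V.  A matching is a set of edges. *)

definition nbr :: "('u \<times> 'v) set \<Rightarrow> 'u \<Rightarrow> 'v set" where
  "nbr E u = {v. (u, v) \<in> E}"

definition free_U :: "('u \<times> 'v) set \<Rightarrow> 'u \<Rightarrow> bool" where
  "free_U M u = (\<forall>v. (u, v) \<notin> M)"

definition free_V :: "('u \<times> 'v) set \<Rightarrow> 'v \<Rightarrow> bool" where
  "free_V M v = (\<forall>u. (u, v) \<notin> M)"

type_synonym ('u, 'v) alg_state = "('u \<times> 'v) set \<times> ('v \<Rightarrow> int)"

(* one iteration, with arbitrary choice of the free u and of the argmin j *)
definition alg_step :: "'u set \<Rightarrow> ('u \<times> 'v) set \<Rightarrow> ('u, 'v) alg_state \<Rightarrow> ('u, 'v) alg_state \<Rightarrow> bool" where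
  "alg_step U E s s' =
     (\<exists>u\<in>U. free_U (fst s) u \<and>
        (\<exists>j\<in>nbr E u. (\<forall>v\<in>nbr E u. snd s j \<le> snd s v) \<and>
           fst s' = (fst s - {(uold, j) | uold. uold \<in> U}) \<union> {(u, j)} \<and>
           snd s' = (snd s)(j := snd s j + 1)))"

(* s k = (M(k), h(k)); the algorithm has performed i iterations, each performed
   while |M| < N *)
definition alg_run :: "'u set \<Rightarrow> ('u \<times> 'v) set \<Rightarrow> nat \<Rightarrow> (nat \<Rightarrow> ('u, 'v) alg_state) \<Rightarrow> nat \<Rightarrow> bool" where
  "alg_run U E N s i =
     (s 0 = ({}, (\<lambda>_. 0)) \<and>
      (\<forall>k<i. card (fst (s k)) < N \<and> alg_step U E (s k) (s (Suc k))))"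

definition D :: "'v set \<Rightarrow> int \<Rightarrow> ('v \<Rightarrow> int) \<Rightarrow> 'v set" where
  "D V l h = {v \<in> V. h v \<ge> l}"

(* paths: lists of vertices of G, U-vertices tagged Inl, V-vertices tagged Inr *)
fun rel_edge :: "('u \<times> 'v) set \<Rightarrow> 'u + 'v \<Rightarrow> 'u + 'v \<Rightarrow> bool" where
  "rel_edge R (Inl u) (Inr v) = ((u, v) \<in> R)"
| "rel_edge R (Inr v) (Inl u) = ((u, v) \<in> R)"
| "rel_edge R _ _ = False"

definition is_path :: "('u \<times> 'v) set \<Rightarrow> ('u + 'v) list \<Rightarrow> bool" where
  "is_path E p = (p \<noteq> [] \<and> distinct p \<and>
     (\<forall>k. Suc k < length p \<longrightarrow> rel_edge E (p ! k) (p ! Suc k)))"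

definition alternating_path :: "('u \<times> 'v) set \<Rightarrow> ('u \<times> 'v) set \<Rightarrow> ('u + 'v) list \<Rightarrow> bool" where
  "alternating_path E M p = (is_path E p \<and>
     (\<forall>k. Suc (Suc k) < length p \<longrightarrow>
        (rel_edge M (p ! k) (p ! Suc k) \<longleftrightarrow> \<not> rel_edge M (p ! Suc k) (p ! Suc (Suc k)))))"

fun free_vertex :: "('u \<times> 'v) set \<Rightarrow> 'u + 'v \<Rightarrow> bool" where
  "free_vertex M (Inl u) = free_U M u"
| "free_vertex M (Inr v) = free_V M v"

definition augmenting_path :: "('u \<times> 'v) set \<Rightarrow> ('u \<times> 'v) set \<Rightarrow> ('u + 'v) list \<Rightarrow> bool" where
  "augmenting_path E M p = (alternating_path E M p \<and>
     free_vertex M (hd p) \<and> free_vertex M (last p) \<and>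
     isl (hd p) \<noteq> isl (last p))"

(* length = number of edges *)
definition path_length :: "('u + 'v) list \<Rightarrow> nat" where
  "path_length p = length p - 1"

end

theory Submission
  imports Defs
begin

(* Call the value h_v the height of v.  The algorithm maintains
   two invariants: (i) the slack property -- if (u,w) is a matching edge and
   (u,v) any edge then h_w <= h_v + 1 (u was matched to a neighbour of
   minimal height, and heights only grow afterwards, except the matched
   vertex which is raised by exactly one); (ii) every free vertex of V has
   height 0 (heights are raised only when a vertex becomes matched, and a
   matched vertex of V never becomes free again).
   Along an alternating path starting at the free vertex u0, the V-vertices
   sit at positions 1,3,5,...; position 1 is a neighbour of u0 (height >= l)
   and each further non-matching edge after a matching edge loses at most one
   unit of height by (i).  So the V-vertex at position 2j+1 has height
   >= l - j.  An augmenting path ends at a free V-vertex, of height 0 by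
   (ii), whence its length 2j+1 satisfies j >= l. *)

definition height_slack :: "('u \<times> 'v) set \<Rightarrow> ('u \<times> 'v) set \<Rightarrow> ('v \<Rightarrow> int) \<Rightarrow> bool" where
  "height_slack E M h = (\<forall>u w v. (u, w) \<in> M \<longrightarrow> (u, v) \<in> E \<longrightarrow> h w \<le> h v + 1)"

definition free_height_zero :: "('u \<times> 'v) set \<Rightarrow> ('v \<Rightarrow> int) \<Rightarrow> bool" where
  "free_height_zero M h = (\<forall>v. free_V M v \<longrightarrow> h v = 0)"

(* The full invariant; matched U-vertices lie in U so that the removal step
   of the algorithm really unmatches the chosen V-vertex. *)
definition alg_invariant :: "'u set \<Rightarrow> ('u \<times> 'v) set \<Rightarrow> ('u, 'v) alg_state \<Rightarrow> bool" where
  "alg_invariant U E st =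
     (height_slack E (fst st) (snd st) \<and> free_height_zero (fst st) (snd st) \<and>
      (\<forall>u w. (u, w) \<in> fst st \<longrightarrow> u \<in> U))"

lemma alg_invariant_step:
  assumes inv: "alg_invariant U E (M, h)" and step: "alg_step U E (M, h) (M', h')"
  shows "alg_invariant U E (M', h')"
proof -
  from step obtain u j where u: "u \<in> U" and j: "j \<in> nbr E u"
    and j_min: "\<forall>v\<in>nbr E u. h j \<le> h v"
    and M': "M' = (M - {(uold, j) | uold. uold \<in> U}) \<union> {(u, j)}"
    and h': "h' = h(j := h j + 1)"
    unfolding alg_step_def by auto
  have slack: "height_slack E M h" and zero: "free_height_zero M h"
    and inU: "\<forall>u w. (u, w) \<in> M \<longrightarrow> u \<in> U"
    using inv unfolding alg_invariant_def by auto
  have h_mono: "h v \<le> h' v" for v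
    using h' by auto
  have "h' w \<le> h' v + 1" if "(u', w) \<in> M'" "(u', v) \<in> E" for u' w v
  proof (cases "(u', w) = (u, j)")
    case True
    then have "h j \<le> h v"
      using j_min that(2) unfolding nbr_def by auto
    then show ?thesis using True h' h_mono[of v] by auto
  next
    case False
    then have "(u', w) \<in> M" and "w \<noteq> j"
      using that(1) M' inU by auto
    moreover have "h w \<le> h v + 1"
      using slack \<open>(u', w) \<in> M\<close> that(2) unfolding height_slack_def by blast
    ultimately show ?thesis using h' h_mono[of v] by auto
  qed
  moreover have "h' v = 0" if "free_V M' v" for v
  proof -
    have "v \<noteq> j" and "free_V M v"
      using that M' unfolding free_V_def by auto
    then show ?thesis using zero h' unfolding free_height_zero_def by auto
  qed
  ultimately show ?thesis
    using M' inU u unfolding alg_invariant_def height_slack_def free_height_zero_def by auto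
qed

lemma alg_invariant_run:
  assumes run: "alg_run U E N s i" and "k \<le> i"
  shows "alg_invariant U E (s k)"
  using \<open>k \<le> i\<close>
proof (induction k)
  case 0
  then show ?case
    using run unfolding alg_run_def alg_invariant_def height_slack_def
      free_height_zero_def by auto
next
  case (Suc k)
  then have "alg_step U E (s k) (s (Suc k))"
    using run unfolding alg_run_def by auto
  then show ?case
    using alg_invariant_step[of U E "fst (s k)" "snd (s k)" "fst (s (Suc k))" "snd (s (Suc k))"]
      Suc by simp
qed

lemma path_side_parity:
  assumes path: "is_path E p" and hd: "hd p = Inl u0" and "k < length p"
  shows "isl (p ! k) = even k"
  using \<open>k < length p\<close>
proof (induction k)
  case 0
  then show ?case using hd by (cases p) auto
next
  case (Suc k)
  then have "rel_edge E (p ! k) (p ! Suc k)" and "isl (p ! k) = even k"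
    using path unfolding is_path_def by auto
  then show ?case by (cases "p ! k"; cases "p ! Suc k") auto
qed

lemma alternating_path_matched_parity:
  assumes alt: "alternating_path E M p" and hd: "hd p = Inl u0"
    and free: "free_U M u0" and "Suc k < length p"
  shows "rel_edge M (p ! k) (p ! Suc k) = odd k"
  using \<open>Suc k < length p\<close>
proof (induction k)
  case 0
  have "p ! 0 = Inl u0" using hd 0 by (cases p) auto
  then show ?case using free unfolding free_U_def by (cases "p ! Suc 0") auto
next
  case (Suc k)
  then show ?case using alt unfolding alternating_path_def by auto
qed

lemma alternating_path_height_bound:
  assumes slack: "height_slack E M h"
    and alt: "alternating_path E M p" and hd: "hd p = Inl u0"
    and free: "free_U M u0" and high: "\<forall>v\<in>nbr E u0. l \<le> h v"
    and "2 * j + 1 < length p"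
  shows "\<exists>v. p ! (2 * j + 1) = Inr v \<and> l - int j \<le> h v"
proof -
  have path: "is_path E p" using alt unfolding alternating_path_def by simp
  note side = path_side_parity[OF path hd]
  have edge: "rel_edge E (p ! k) (p ! Suc k)" if "Suc k < length p" for k
    using path that unfolding is_path_def by auto
  show ?thesis
    using \<open>2 * j + 1 < length p\<close>
  proof (induction j)
    case 0
    have "p ! 0 = Inl u0" using hd 0 by (cases p) auto
    moreover obtain v where v: "p ! 1 = Inr v"
      using side[of 1] 0 by (cases "p ! 1") auto
    ultimately have "v \<in> nbr E u0"
      using edge[of 0] 0 unfolding nbr_def by auto
    then show ?case using v high by auto
  next
    case (Suc j)
    then obtain v where v: "p ! (2 * j + 1) = Inr v" "l - int j \<le> h v" by auto
    obtain u where u: "p ! Suc (2 * j + 1) = Inl u"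
      using side[of "Suc (2 * j + 1)"] Suc.prems by (cases "p ! Suc (2 * j + 1)") auto
    obtain w where w: "p ! (2 * Suc j + 1) = Inr w"
      using side[of "2 * Suc j + 1"] Suc.prems by (cases "p ! (2 * Suc j + 1)") auto
    have "(u, v) \<in> M"
      using alternating_path_matched_parity[OF alt hd free, of "2 * j + 1"] Suc.prems u v
      by auto
    moreover have "(u, w) \<in> E"
      using edge[of "Suc (2 * j + 1)"] Suc.prems u w by auto
    ultimately have "h v \<le> h w + 1"
      using slack unfolding height_slack_def by blast
    then show ?case using v w by auto
  qed
qed

lemma augmenting_path_length_bound:
  assumes slack: "height_slack E M h" and zero: "free_height_zero M h"
    and aug: "augmenting_path E M p" and hd: "hd p = Inl u0"
    and free: "free_U M u0" and high: "\<forall>v\<in>nbr E u0. l \<le> h v"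
  shows "2 * l + 1 \<le> int (path_length p)"
proof -
  have alt: "alternating_path E M p"
    and last_free: "free_vertex M (last p)" and last_side: "\<not> isl (last p)"
    using aug hd unfolding augmenting_path_def by auto
  have path: "is_path E p" using alt unfolding alternating_path_def by simp
  then have nonempty: "p \<noteq> []" unfolding is_path_def by simp
  then have last: "last p = p ! (length p - 1)" by (simp add: last_conv_nth)
  then have "odd (length p - 1)"
    using path_side_parity[OF path hd, of "length p - 1"] last_side nonempty by auto
  then obtain j where j: "length p - 1 = 2 * j + 1" by (metis oddE)
  moreover have "2 * j + 1 < length p" using j nonempty by (cases p) auto
  ultimately obtain v where v: "p ! (2 * j + 1) = Inr v" "l - int j \<le> h v"
    using alternating_path_height_bound[OF slack alt hd free high] by blast
  have "h v = 0"
    using last_free last j v zero unfolding free_height_zero_def by auto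
  then show ?thesis using v j unfolding path_length_def by auto
qed

theorem mainTheorem7:
  fixes U :: "'u set" and V :: "'v set" and E :: "('u \<times> 'v) set"
    and N :: nat and s :: "nat \<Rightarrow> ('u, 'v) alg_state" and i :: nat
    and l :: int and u0 :: 'u and p :: "('u + 'v) list"
  assumes "finite U" "finite V" "card U = N" "card V = N"
    and "E \<subseteq> U \<times> V"
    and "\<forall>u\<in>U. nbr E u \<noteq> {}"
    and "alg_run U E N s i"
    and "card (fst (s i)) < N"
    and "l \<ge> 0"
    and "u0 \<in> U" "free_U (fst (s i)) u0"
    and "nbr E u0 \<subseteq> D V l (snd (s i))"
    and "augmenting_path E (fst (s i)) p" "hd p = Inl u0"
  shows "int (path_length p) \<ge> 2 * l + 1"
proof -
  have "alg_invariant U E (s i)"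
    using alg_invariant_run[OF assms(7)] by simp
  then have slack: "height_slack E (fst (s i)) (snd (s i))"
    and zero: "free_height_zero (fst (s i)) (snd (s i))"
    unfolding alg_invariant_def by auto
  have high: "\<forall>v\<in>nbr E u0. l \<le> snd (s i) v"
    using assms(12) unfolding D_def by auto
  show ?thesis
    using augmenting_path_length_bound[OF slack zero assms(13,14,11) high] by simp
qed

end
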